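(* Fix an integer $d\ge 2$. For any $n^*,m^*<\infty$ and $\varepsilon>0$ there exist constants $r_1>0$ and $C>0$ such that every pair of integers $n\ge d$, $m\ge2$ with $\sigma_{n,m}^2\ge r_1$ satisfies: (a) $n>n^*$ and $m>m^*$; (b) $n/m\le (1+\varepsilon)\log m$; (c) $\mu_{n,m}\le C\sigma_{n,m}^2$.
   Context: Uniform multinomial occupancy model: $n$ balls distributed independently and uniformly over $m$ urns; $Y_n$ is the number of urns with exactly $d$ balls; $\mu_{n,m}=EY_n=m\binom{n}{d}m^{-d}(1-1/m)^{n-d}$ and $\sigma_{n,m}^2=\mathrm{Var}(Y_n)=\mu_{n,m}+m(m-1)\frac{n!}{d!d!(n-2d)!}m^{-2d}(1-2/m)^{n-2d}-\mu_{n,m}^2$, with the middle term $0$ when $n<2d$. *)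

theory Defs
  imports "HOL-Analysis.Analysis"
begin

text \<open>Mean of the number of urns with exactly d balls, n balls, m urns.\<close>
definition occ_mean :: "nat \<Rightarrow> nat \<Rightarrow> nat \<Rightarrow> real" where
  "occ_mean d n m = real m * real (n choose d) * (real m) powi (- int d)
      * (1 - 1 / real m) ^ (n - d)"

definition occ_var :: "nat \<Rightarrow> nat \<Rightarrow> nat \<Rightarrow> real" where
  "occ_var d n m = occ_mean d n m
     + (if n < 2 * d then 0 else
          real m * (real m - 1) * (fact n / (fact d * fact d * fact (n - 2 * d)))
          * (real m) powi (- 2 * int d) * (1 - 2 / real m) ^ (n - 2 * d))
     - (occ_mean d n m)^2"

end

theory Submission
  imports Defs
begin

(*
  The proof compares mu = E Y_n and sigma^2 = Var Y_n with the Poisson quantity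
  T = m * lambda^d e^(-lambda) / d!, where lambda = n/m.

  (1) Upper bounds: mu <= e^(d/m) T and the pair term W = E[Y_n(Y_n - 1)] <= e^(4d/m) T^2,
      hence sigma^2 <= e^(2d) (T + T^2).  So a large variance forces a large T.
  (2) T is small unless m, n are large and lambda <= (1 + eps) log m:
      T <= m,  T <= n^d,  and T <= ((1 + eps)/eps)^d when lambda > (1 + eps) log m.
      This gives parts (a) and (b).
  (3) Part (c): writing W = mu^2 R we get sigma^2 = mu - mu^2 (1 - R).  Logarithmic
      estimates give 1 - R <= Delta for an explicit deficit Delta, and a calculus bound
      on lambda^(d-1) e^(-lambda) ((lambda - d)^2 + lambda) yields mu Delta <= 4/5 once
      n and m are large, hence mu <= 5 sigma^2.
*)


section \<open>Elementary real analysis\<close>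

lemma exp_partial_series_le:
  fixes x :: real
  assumes "0 \<le> x" "finite A"
  shows "(\<Sum>n\<in>A. x^n / fact n) \<le> exp x"
proof -
  have "(\<Sum>n\<in>A. x^n /\<^sub>R fact n) \<le> (\<Sum>n. x^n /\<^sub>R fact n)"
    by (rule sum_le_suminf[OF summable_exp_generic]) (use assms in auto)
  also have "\<dots> = exp x" by (simp add: exp_def)
  finally show ?thesis by (simp add: divide_inverse mult.commute)
qed

text \<open>A single term of the series: the Poisson weight x^k e^(-x)/k! is at most 1.\<close>
lemma pow_mul_exp_neg_le_fact:
  fixes x :: real
  assumes "0 \<le> x"
  shows "x^k * exp (-x) \<le> fact k"
proof -
  have "x^k / fact k \<le> exp x" using exp_partial_series_le[OF assms, of "{k}"] by simp
  hence "x^k \<le> fact k * exp x" by (simp add: divide_le_eq mult.commute)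
  hence "x^k * exp (-x) \<le> fact k * exp x * exp (-x)" by (simp add: mult_right_mono)
  also have "\<dots> = fact k" by (simp add: exp_minus)
  finally show ?thesis .
qed

text \<open>The two numerical values of e needed for the constant 3/4 in the dispersion bound.\<close>
lemma exp_numeric_bounds: "7 \<le> exp (2::real)" "12 \<le> exp (5/2::real)"
proof -
  have "7 \<le> (\<Sum>n<6. (2::real)^n / fact n)"
    by (simp add: lessThan_nat_numeral fact_numeral)
  also have "\<dots> \<le> exp 2" by (rule exp_partial_series_le) simp_all
  finally show "7 \<le> exp (2::real)" .
  have "12 \<le> (\<Sum>n<8. (5/2::real)^n / fact n)"
    by (simp add: lessThan_nat_numeral fact_numeral power_divide)
  also have "\<dots> \<le> exp (5/2)" by (rule exp_partial_series_le) simp_all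
  finally show "12 \<le> exp (5/2::real)" .
qed

lemma one_minus_pow_le_exp:
  fixes a :: real
  assumes "a \<le> 1"
  shows "(1 - a)^k \<le> exp (- (real k * a))"
proof -
  have "(1 - a)^k \<le> exp (-a)^k"
    by (rule power_mono) (use assms exp_ge_add_one_self[of "-a"] in auto)
  also have "\<dots> = exp (- (real k * a))" by (simp add: exp_of_nat_mult[symmetric])
  finally show ?thesis .
qed

lemma ln_ge_one_minus_inverse:
  fixes y :: real
  assumes "0 < y"
  shows "1 - 1/y \<le> ln y"
proof -
  have "ln (1/y) \<le> 1/y - 1" using assms by (intro ln_le_minus_one) simp
  thus ?thesis using assms by (simp add: ln_div)
qed

text \<open>Second-order upper bound for ln below 1; it yields the Gaussian decay of u^d e^(-u).\<close>
lemma ln_le_quadratic: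
  fixes z :: real
  assumes "0 < z" "z \<le> 1"
  shows "ln z \<le> (z - 1) - (z - 1)^2 / 2"
proof -
  let ?h = "\<lambda>y::real. y - 1 - (y - 1)^2 / 2 - ln y"
  have "?h 1 \<le> ?h z"
  proof (rule deriv_nonpos_imp_antimono[where g = ?h and g' = "\<lambda>y. - ((y - 1)^2 / y)"])
    fix x assume "x \<in> {z..1}"
    hence "0 < x" using assms by auto
    thus "(?h has_real_derivative - ((x - 1)^2 / x)) (at x)"
      by (auto intro!: derivative_eq_intros simp: field_simps power2_eq_square)
    show "- ((x - 1)^2 / x) \<le> 0" using \<open>0 < x\<close> by simp
  qed (use assms in auto)
  thus ?thesis by simp
qed

lemma le_at_peak:
  fixes f f' :: "real \<Rightarrow> real"
  assumes deriv: "\<And>x. (f has_real_derivative f' x) (at x)"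
    and up: "\<And>x. a \<le> x \<Longrightarrow> x \<le> p \<Longrightarrow> 0 \<le> f' x"
    and down: "\<And>x. p \<le> x \<Longrightarrow> x \<le> b \<Longrightarrow> f' x \<le> 0"
    and "a \<le> u" "u \<le> b"
  shows "f u \<le> f p"
proof (cases "u \<le> p")
  case True
  show ?thesis by (rule deriv_nonneg_imp_mono[where g = f and g' = f']) (use deriv up True assms in auto)
next
  case False
  show ?thesis by (rule deriv_nonpos_imp_antimono[where g = f and g' = f']) (use deriv down False assms in auto)
qed


section \<open>The Poisson profile u^d e^(-u)\<close>

lemma exp_nat_mul_ln:
  fixes u :: real
  assumes "0 < u"
  shows "exp (real k * ln u) = u^k"
  using assms by (simp add: exp_of_nat_mult)

lemma pow_exp_le_mode:
  fixes u :: real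
  assumes "0 < u" "0 < d"
  shows "u^d * exp (-u) \<le> real d ^ d * exp (- real d)"
proof -
  have "ln (u / real d) \<le> u / real d - 1" using assms by (intro ln_le_minus_one) simp
  hence "real d * ln (u / real d) \<le> real d * (u / real d - 1)" by (simp add: mult_left_mono)
  hence "real d * ln u - u \<le> real d * ln (real d) - real d"
    using assms by (simp add: ln_div right_diff_distrib)
  hence "exp (real d * ln u - u) \<le> exp (real d * ln (real d) - real d)" by simp
  thus ?thesis using assms by (simp add: exp_diff exp_minus exp_nat_mul_ln field_simps)
qed

lemma pow_exp_le_mode_gaussian:
  fixes u :: real
  assumes "0 < u" "u \<le> real d"
  shows "u^d * exp (-u) \<le> real d ^ d * exp (- real d) * exp (- ((real d - u)^2 / (2 * real d)))"
proof -
  have dpos: "0 < real d" using assms by simp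
  define z where "z = u / real d"
  define c where "c = (real d - u)^2 / (2 * real d)"
  have z: "0 < z" "z \<le> 1" using assms dpos by (auto simp: z_def)
  have "real d * ln z \<le> real d * ((z - 1) - (z - 1)^2 / 2)"
    using ln_le_quadratic[OF z] dpos by (simp add: mult_left_mono)
  also have "\<dots> = (u - real d) - (real d - u)^2 / (2 * real d)"
    using dpos by (simp add: z_def field_simps power2_eq_square)
  finally have "real d * ln u - u \<le> real d * ln (real d) - real d - c"
    using assms dpos by (simp add: z_def c_def ln_div algebra_simps)
  hence "exp (real d * ln u - u) \<le> exp (real d * ln (real d) - real d - c)" by simp
  moreover have "exp (real d * ln u - u) = u^d * exp (-u)"
    using assms by (simp add: exp_diff exp_minus exp_nat_mul_ln divide_inverse)
  moreover have "exp (real d * ln (real d) - real d - c) = real d ^ d * exp (- real d) * exp (-c)"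
    using dpos by (simp add: exp_diff exp_minus exp_nat_mul_ln divide_inverse)
  ultimately show ?thesis by (simp add: c_def)
qed

lemma pow_exp_mode_le_fact:
  assumes "2 \<le> d"
  shows "real d ^ d * exp (- real d) \<le> 2 * exp (-2) * fact d"
  using assms
proof (induction d rule: nat_induct_at_least)
  case base
  then show ?case by (simp add: fact_numeral)
next
  case (Suc d)
  have dpos: "0 < real d" using Suc by simp
  have e: "(1 + 1 / real d)^d \<le> exp 1"
  proof -
    have "(1 + 1 / real d)^d \<le> exp (1 / real d)^d"
      by (rule power_mono) (use exp_ge_add_one_self[of "1 / real d"] dpos in auto)
    also have "\<dots> = exp 1" using dpos by (simp add: exp_of_nat_mult[symmetric])
    finally show ?thesis .
  qed
  have "real d + 1 = real d * (1 + 1 / real d)" using dpos by (simp add: field_simps)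
  hence "(real d + 1)^d = real d ^ d * (1 + 1 / real d)^d" by (simp only: power_mult_distrib)
  hence pow: "real (Suc d) ^ Suc d = (real d + 1) * (real d ^ d * (1 + 1 / real d)^d)"
    by (simp add: add.commute)
  have ex: "exp (- real (Suc d)) = exp (- real d) * exp (-1)" by (simp add: mult_exp_exp)
  have "real (Suc d) ^ Suc d * exp (- real (Suc d))
      = (real d + 1) * (real d ^ d * exp (- real d)) * ((1 + 1 / real d)^d * exp (-1))"
    unfolding pow ex by (simp only: mult_ac)
  also have "\<dots> \<le> (real d + 1) * (real d ^ d * exp (- real d)) * 1"
    using e by (intro mult_left_mono) (simp_all add: exp_minus field_simps)
  also have "\<dots> \<le> (real d + 1) * (2 * exp (-2) * fact d)" using Suc.IH by simp
  also have "\<dots> = 2 * exp (-2) * fact (Suc d)" by (simp add: algebra_simps)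
  finally show ?case .
qed

text \<open>
  The dispersion profile: d! times the leading term of T times the deficit of part (c),
  as a function of the load u = n/m.
\<close>
definition dispersion_profile :: "nat \<Rightarrow> real \<Rightarrow> real" where
  "dispersion_profile d u = u^(d-1) * exp (-u) * ((u - real d)^2 + u)"

text \<open>Its derivative changes sign exactly at d - sqrt d, d and d + sqrt d.\<close>
lemma dispersion_profile_deriv:
  "(dispersion_profile (k+2) has_real_derivative
     exp (-u) * u^k * ((real (k+2) - u) * ((u - real (k+2))^2 - real (k+2)))) (at u)"
proof -
  define D where "D = real (k+2)"
  have "(dispersion_profile (k+2) has_real_derivative
     real (k+1) * u^k * exp (-u) * ((u - D)^2 + u) - u^(k+1) * exp (-u) * ((u - D)^2 + u)
       + u^(k+1) * exp (-u) * (2 * (u - D) + 1)) (at u)"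
    unfolding dispersion_profile_def D_def[symmetric]
    by (rule derivative_eq_intros refl | simp)+ (simp add: right_diff_distrib mult_ac)
  moreover have "real (k+1) * u^k * exp (-u) * ((u - D)^2 + u) - u^(k+1) * exp (-u) * ((u - D)^2 + u)
       + u^(k+1) * exp (-u) * (2 * (u - D) + 1)
     = exp (-u) * u^k * ((D - u) * ((u - D)^2 - D))"
    by (simp add: D_def power2_eq_square algebra_simps)
  ultimately show ?thesis by (simp add: D_def)
qed

lemma dispersion_profile_at_critical:
  assumes "0 < u" "1 \<le> d" "(u - real d)^2 = real d"
  shows "dispersion_profile d u = (u^d * exp (-u)) * ((real d + u) / u)"
proof -
  have "u^d = u * u^(d-1)" using assms by (simp add: power_eq_if)
  thus ?thesis using assms by (simp add: dispersion_profile_def field_simps)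
qed

lemma dispersion_profile_lower_peak:
  assumes "2 \<le> d"
  shows "dispersion_profile d (real d - sqrt (real d)) \<le> 3/4 * fact d"
proof -
  define D where "D = real d"
  define u where "u = D - sqrt D"
  have D2: "2 \<le> D" using assms by (simp add: D_def)
  have crit: "(u - D)^2 = D" using D2 by (simp add: u_def)
  have s14: "1.4 \<le> sqrt D" using D2 by (intro real_le_rsqrt) (simp add: power2_eq_square)
  have "1.4 * sqrt D \<le> sqrt D * sqrt D" using s14 D2 by (intro mult_right_mono) auto
  hence sD: "1.4 * sqrt D \<le> D" using D2 by simp
  have upos: "0 < u" using sD s14 by (simp add: u_def)
  have uD: "u \<le> real d" by (simp add: u_def D_def)
  have "u^d * exp (-u) \<le> D^d * exp (-D) * exp (- ((D - u)^2 / (2 * D)))"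
    unfolding D_def by (rule pow_exp_le_mode_gaussian[OF upos uD])
  also have "(D - u)^2 / (2 * D) = 1/2" using crit D2 by (simp add: power2_commute)
  finally have p: "u^d * exp (-u) \<le> D^d * exp (-D) * exp (-1/2)" by simp
  have q: "(D + u) / u \<le> 9/2" using upos sD by (simp add: divide_le_eq u_def)
  have mode: "D^d * exp (-D) \<le> 2 * exp (-2) * fact d"
    unfolding D_def by (rule pow_exp_mode_le_fact[OF assms])
  have "dispersion_profile d u = (u^d * exp (-u)) * ((D + u) / u)"
    unfolding D_def by (rule dispersion_profile_at_critical[OF upos]) (use assms crit in \<open>simp_all add: D_def\<close>)
  also have "\<dots> \<le> (D^d * exp (-D) * exp (-1/2)) * (9/2)"
    by (rule mult_mono[OF p q]) (use upos D2 in auto)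
  also have "\<dots> \<le> (2 * exp (-2) * fact d * exp (-1/2)) * (9/2)"
    using mult_right_mono[OF mult_right_mono[OF mode, of "exp (-1/2)"], of "9/2"] by simp
  also have "\<dots> = 9 * fact d * (exp (-2) * exp (-1/2))" by simp
  also have "exp (-2) * exp (-1/2) = exp (- (5/2) :: real)" by (simp add: mult_exp_exp)
  also have "exp (- (5/2)) = 1 / exp (5/2::real)" by (simp add: exp_minus inverse_eq_divide)
  also have "9 * fact d * (1 / exp (5/2)) \<le> 9 * fact d * (1 / (12::real))"
    using exp_numeric_bounds(2) by (intro mult_left_mono divide_left_mono) auto
  finally show ?thesis by (simp add: D_def u_def)
qed

lemma dispersion_profile_upper_peak:
  assumes "2 \<le> d"
  shows "dispersion_profile d (real d + sqrt (real d)) \<le> 3/4 * fact d"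
proof -
  define D where "D = real d"
  define u where "u = D + sqrt D"
  have D2: "2 \<le> D" using assms by (simp add: D_def)
  have upos: "0 < u" using D2 by (simp add: u_def add_pos_nonneg)
  have p: "u^d * exp (-u) \<le> D^d * exp (-D)" using pow_exp_le_mode[of u d] upos assms by (simp add: D_def)
  have q: "(D + u) / u \<le> 2" using upos D2 by (simp add: divide_le_eq u_def)
  have "dispersion_profile d u = (u^d * exp (-u)) * ((D + u) / u)"
    using dispersion_profile_at_critical[of u d] upos assms D2 by (simp add: D_def u_def)
  also have "\<dots> \<le> (D^d * exp (-D)) * 2"
    by (rule mult_mono[OF p q]) (use upos D2 in auto)
  also have "\<dots> \<le> 4 * fact d / exp 2"
    using pow_exp_mode_le_fact[OF assms] by (simp add: D_def exp_minus field_simps)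
  also have "\<dots> \<le> 4 * fact d / 7" using exp_numeric_bounds(1) by (intro divide_left_mono) auto
  also have "\<dots> \<le> 3/4 * fact d" by simp
  finally show ?thesis by (simp add: D_def u_def)
qed

text \<open>
  The key calculus estimate: the profile is maximal at one of its two local maxima
  d -+ sqrt d, and both values are at most (3/4) d!.
\<close>
lemma dispersion_profile_le:
  assumes "2 \<le> d" "0 < u"
  shows "dispersion_profile d u \<le> 3/4 * fact d"
proof -
  obtain k where dk: "d = k + 2" using assms by (metis add.commute le_Suc_ex)
  define D where "D = real d"
  define f' where "f' = (\<lambda>x. exp (-x) * x^k * ((D - x) * ((x - D)^2 - D)))"
  have deriv: "(dispersion_profile d has_real_derivative f' x) (at x)" for x
    using dispersion_profile_deriv[of k x] by (simp add: f'_def D_def dk)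
  have f'_nonneg: "0 \<le> f' x" if "0 \<le> x" "0 \<le> (D - x) * ((x - D)^2 - D)" for x
    unfolding f'_def by (rule mult_nonneg_nonneg) (use that in simp_all)
  have f'_nonpos: "f' x \<le> 0" if "0 \<le> x" "(D - x) * ((x - D)^2 - D) \<le> 0" for x
    unfolding f'_def by (rule mult_nonneg_nonpos) (use that in simp_all)
  have far: "D \<le> (x - D)^2" if "sqrt D \<le> \<bar>x - D\<bar>" for x
    using power_mono[OF that, of 2] assms by (simp add: D_def)
  have near: "(x - D)^2 \<le> D" if "\<bar>x - D\<bar> \<le> sqrt D" for x
    using power_mono[OF that, of 2] assms by (simp add: D_def)
  have sq0: "0 \<le> sqrt D" by (simp add: D_def)
  have sD: "sqrt D \<le> D" using assms by (simp add: D_def real_sqrt_le_iff' power2_eq_square)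
  show ?thesis
  proof (cases "u \<le> D")
    case True
    have "dispersion_profile d u \<le> dispersion_profile d (D - sqrt D)"
    proof (rule le_at_peak[OF deriv, of 0 _ D])
      fix x assume x: "0 \<le> x" "x \<le> D - sqrt D"
      have a: "0 \<le> D - x" using x sq0 by linarith
      have "sqrt D \<le> \<bar>x - D\<bar>" using x sq0 by (simp add: abs_if)
      hence b: "0 \<le> (x - D)^2 - D" using far by simp
      show "0 \<le> f' x" by (rule f'_nonneg[OF x(1) mult_nonneg_nonneg[OF a b]])
    next
      fix x assume x: "D - sqrt D \<le> x" "x \<le> D"
      have x0: "0 \<le> x" using x sD by linarith
      have a: "0 \<le> D - x" using x by simp
      have "\<bar>x - D\<bar> \<le> sqrt D" using x sq0 by (simp add: abs_if)
      hence b: "(x - D)^2 - D \<le> 0" using near by simp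
      show "f' x \<le> 0" by (rule f'_nonpos[OF x0 mult_nonneg_nonpos[OF a b]])
    qed (use True assms in auto)
    thus ?thesis using dispersion_profile_lower_peak[OF assms(1)] by (simp add: D_def)
  next
    case False
    have "dispersion_profile d u \<le> dispersion_profile d (D + sqrt D)"
    proof (rule le_at_peak[OF deriv, of D _ u])
      fix x assume x: "D \<le> x" "x \<le> D + sqrt D"
      have x0: "0 \<le> x" using x sq0 sD by linarith
      have a: "D - x \<le> 0" using x by simp
      have "\<bar>x - D\<bar> \<le> sqrt D" using x sq0 by (simp add: abs_if)
      hence b: "(x - D)^2 - D \<le> 0" using near by simp
      show "0 \<le> f' x" by (rule f'_nonneg[OF x0 mult_nonpos_nonpos[OF a b]])
    next
      fix x assume x: "D + sqrt D \<le> x" "x \<le> u"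
      have x0: "0 \<le> x" using x sq0 sD by linarith
      have a: "D - x \<le> 0" using x sq0 by linarith
      have "sqrt D \<le> \<bar>x - D\<bar>" using x sq0 by (simp add: abs_if)
      hence b: "0 \<le> (x - D)^2 - D" using far by simp
      show "f' x \<le> 0" by (rule f'_nonpos[OF x0 mult_nonpos_nonneg[OF a b]])
    qed (use False in auto)
    thus ?thesis using dispersion_profile_upper_peak[OF assms(1)] by (simp add: D_def)
  qed
qed



section \<open>Factorial estimates\<close>

lemma falling_fact_le_pow:
  assumes "r \<le> n"
  shows "(fact n / fact (n - r) :: real) \<le> real n ^ r"
proof -
  have "real (n choose r) * fact r \<le> real n ^ r"
    using binomial_fact_pow[of n r] by (metis of_nat_fact of_nat_le_iff of_nat_mult of_nat_power)
  thus ?thesis using fact_binomial[OF assms, where 'a=real] by (simp add: mult.commute)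
qed

lemma binomial_le_pow_div_fact:
  assumes "d \<le> n"
  shows "real (n choose d) \<le> real n ^ d / fact d"
  using falling_fact_le_pow[OF assms] fact_binomial[OF assms, where 'a=real]
  by (simp add: le_divide_eq mult.commute)

text \<open>
  (n-d)!(n-j)! / (n!(n-d-j)!) is the product of the j factors (n-d-i)/(n-i), i < j;
  for i < d each of them is at least (n-2d+1)/(n-d+1).
\<close>
lemma fact_ratio_step_bound:
  assumes "2*d \<le> n" "j \<le> d"
  shows "(fact n :: real) * fact (n-d-j) * (real n - 2*real d + 1)^j
           \<le> fact (n-d) * fact (n-j) * (real n - real d + 1)^j"
  using assms(2)
proof (induction j)
  case 0
  then show ?case by simp
next
  case (Suc j)
  define a where "a = real n - 2*real d + 1"
  define b where "b = real n - real d + 1"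
  have jd: "j < d" using Suc by simp
  define X where "X = (fact n :: real) * fact (n - d - Suc j) * a^j"
  define Y where "Y = (fact (n-d) :: real) * fact (n - Suc j) * b^j"
  have X0: "0 \<le> X" using assms by (simp add: X_def a_def)
  have IH: "X * (real n - real d - real j) \<le> Y * (real n - real j)"
  proof -
    have "n - d - j = Suc (n - d - Suc j)" "n - j = Suc (n - Suc j)" using assms jd by simp_all
    hence "(fact (n-d-j) :: real) = real (n - d - j) * fact (n - d - Suc j)"
      and "(fact (n-j) :: real) = real (n - j) * fact (n - Suc j)"
      by (metis fact_Suc)+
    moreover have "real (n - d - j) = real n - real d - real j" "real (n - j) = real n - real j"
      using assms jd by (simp_all add: of_nat_diff)
    ultimately show ?thesis using Suc by (simp add: X_def Y_def a_def b_def mult_ac diff_diff_eq)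
  qed
  have key: "a * (real n - real j) \<le> (real n - real d - real j) * b"
  proof -
    have "(real n - real d - real j) * b - a * (real n - real j) = real d * (real d - 1 - real j)"
      by (simp add: a_def b_def algebra_simps)
    moreover have "0 \<le> real d * (real d - 1 - real j)" using jd by simp
    ultimately show ?thesis by linarith
  qed
  have pos: "0 < real n - real j" using assms jd by simp
  have "(X * a) * (real n - real j) \<le> X * ((real n - real d - real j) * b)"
    using mult_left_mono[OF key X0] by (simp add: mult_ac)
  also have "\<dots> = (X * (real n - real d - real j)) * b" by (simp add: mult_ac)
  also have "\<dots> \<le> (Y * (real n - real j)) * b"
    using IH assms by (intro mult_right_mono) (auto simp: b_def)
  finally have "X * a \<le> Y * b" using pos by (simp add: mult_ac)
  thus ?case by (simp add: X_def Y_def a_def b_def mult_ac)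
qed

lemma fact_ratio_ge:
  assumes "2*d \<le> n"
  shows "((real n - 2*real d + 1) / (real n - real d + 1))^d
           \<le> (fact (n-d))^2 / (fact n * fact (n - 2*d))"
proof -
  have "(fact n :: real) * fact (n-d-d) * (real n - 2*real d + 1)^d
          \<le> fact (n-d) * fact (n-d) * (real n - real d + 1)^d"
    using fact_ratio_step_bound[OF assms, of d] by simp
  moreover have "n - d - d = n - 2*d" by simp
  moreover have "0 < real n - real d + 1" using assms by simp
  ultimately show ?thesis
    by (simp add: power_divide divide_le_eq le_divide_eq power2_eq_square mult_ac)
qed


section \<open>Mean, pair term and variance of the occupancy count\<close>

lemma power_int_minus_nat: "(x::real) powi (- int k) = 1 / x^k"
  by (simp add: power_int_minus inverse_eq_divide)

text \<open>The pair term W = E[Y(Y-1)]: the middle term of the variance when n >= 2d.\<close>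
definition occ_pair :: "nat \<Rightarrow> nat \<Rightarrow> nat \<Rightarrow> real" where
  "occ_pair d n m = real m * (real m - 1) * (fact n / (fact d * fact d * fact (n - 2*d)))
      / real m ^ (2*d) * (1 - 2 / real m) ^ (n - 2*d)"

text \<open>The Poisson approximation T = m lambda^d e^(-lambda)/d! of the mean, lambda = n/m.\<close>
definition poisson_occ :: "nat \<Rightarrow> nat \<Rightarrow> nat \<Rightarrow> real" where
  "poisson_occ d n m = real m * (real n / real m)^d * exp (- (real n / real m)) / fact d"

lemma occ_mean_alt:
  "occ_mean d n m = real m * real (n choose d) / real m ^ d * (1 - 1 / real m)^(n - d)"
  unfolding occ_mean_def power_int_minus_nat by simp

lemma occ_var_eq:
  "occ_var d n m = occ_mean d n m + (if n < 2*d then 0 else occ_pair d n m) - (occ_mean d n m)^2"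
proof -
  have "real m powi (- 2 * int d) = 1 / real m ^ (2*d)"
    using power_int_minus_nat[of "real m" "2*d"] by simp
  thus ?thesis unfolding occ_var_def occ_pair_def by simp
qed

lemma occ_mean_nonneg:
  assumes "1 \<le> m"
  shows "0 \<le> occ_mean d n m"
  using assms by (simp add: occ_mean_alt)

lemma poisson_occ_nonneg: "0 \<le> poisson_occ d n m"
  by (simp add: poisson_occ_def)

lemma occ_mean_le_poisson:
  assumes "2 \<le> m" "d \<le> n"
  shows "occ_mean d n m \<le> exp (real d / real m) * poisson_occ d n m"
proof -
  have mpos: "0 < real m" using assms by simp
  have "occ_mean d n m = (real m / real m ^ d) * real (n choose d) * (1 - 1 / real m)^(n - d)"
    by (simp add: occ_mean_alt)
  also have "\<dots> \<le> (real m / real m ^ d) * (real n ^ d / fact d) * exp (- (real (n - d) * (1 / real m)))"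
    using assms mpos
    by (intro mult_mono mult_left_mono binomial_le_pow_div_fact one_minus_pow_le_exp) auto
  also have "exp (- (real (n - d) * (1 / real m))) = exp (- (real n / real m)) * exp (real d / real m)"
    using assms by (simp add: of_nat_diff mult_exp_exp diff_divide_distrib)
  also have "(real m / real m ^ d) * (real n ^ d / fact d) * (exp (- (real n / real m)) * exp (real d / real m))
      = exp (real d / real m) * poisson_occ d n m"
    by (simp add: poisson_occ_def power_divide)
  finally show ?thesis .
qed

lemma occ_pair_le_poisson:
  assumes "2 \<le> m" "2*d \<le> n"
  shows "occ_pair d n m \<le> exp (4 * real d / real m) * (poisson_occ d n m)^2"
proof -
  have mpos: "0 < real m" using assms by simp
  have "occ_pair d n m = (real m * (real m - 1) / real m ^ (2*d))
      * ((fact n / fact (n - 2*d)) / (fact d)^2) * (1 - 2 / real m)^(n - 2*d)"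
    by (simp add: occ_pair_def power2_eq_square)
  also have "\<dots> \<le> (real m ^ 2 / real m ^ (2*d)) * (real n ^ (2*d) / (fact d)^2)
      * exp (- (real (n - 2*d) * (2 / real m)))"
  proof (rule mult_mono[OF mult_mono])
    show "(1 - 2 / real m)^(n - 2*d) \<le> exp (- (real (n - 2*d) * (2 / real m)))"
      using assms by (intro one_minus_pow_le_exp) (simp add: field_simps)
    show "(fact n / fact (n - 2*d)) / (fact d)^2 \<le> real n ^ (2*d) / (fact d)^2"
      using falling_fact_le_pow[of "2*d" n] assms by (intro divide_right_mono) simp_all
    show "real m * (real m - 1) / real m ^ (2*d) \<le> real m ^ 2 / real m ^ (2*d)"
      using mpos by (intro divide_right_mono) (auto simp: power2_eq_square)
  qed (use assms mpos in auto)
  also have "exp (- (real (n - 2*d) * (2 / real m)))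
      = exp (- (real n / real m))^2 * exp (4 * real d / real m)"
    using assms by (simp add: of_nat_diff mult_exp_exp power2_eq_square field_simps)
  also have "(real m ^ 2 / real m ^ (2*d)) * (real n ^ (2*d) / (fact d)^2)
      * (exp (- (real n / real m))^2 * exp (4 * real d / real m))
      = exp (4 * real d / real m) * (poisson_occ d n m)^2"
    by (simp add: poisson_occ_def power_divide power_mult_distrib power_mult field_simps)
  finally show ?thesis .
qed

lemma occ_var_le_poisson:
  assumes "2 \<le> m" "d \<le> n"
  shows "occ_var d n m \<le> exp (2 * real d) * (poisson_occ d n m + (poisson_occ d n m)^2)"
proof -
  let ?T = "poisson_occ d n m" and ?E = "exp (2 * real d)"
  have T0: "0 \<le> ?T" by (rule poisson_occ_nonneg)
  have "real d * 1 \<le> real d * (2 * real m)" using assms by (intro mult_left_mono) simp_all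
  hence e1: "exp (real d / real m) \<le> ?E" using assms by (simp add: divide_le_eq mult_ac)
  have "real d * 4 \<le> real d * (2 * real m)" using assms by (intro mult_left_mono) simp_all
  hence e2: "exp (4 * real d / real m) \<le> ?E" using assms by (simp add: divide_le_eq mult_ac)
  have mean: "occ_mean d n m \<le> ?E * ?T"
    using occ_mean_le_poisson[OF assms] mult_right_mono[OF e1 T0] by linarith
  have pair: "(if n < 2*d then 0 else occ_pair d n m) \<le> ?E * ?T^2"
  proof (cases "n < 2*d")
    case False
    hence "2*d \<le> n" by simp
    from occ_pair_le_poisson[OF assms(1) this] show ?thesis
      using mult_right_mono[OF e2, of "?T^2"] False by simp
  qed simp
  have "occ_var d n m \<le> occ_mean d n m + (if n < 2*d then 0 else occ_pair d n m)"
    by (simp add: occ_var_eq)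
  thus ?thesis using mean pair unfolding distrib_left by linarith
qed

lemma poisson_occ_gt_of_large_var:
  assumes "2 \<le> m" "d \<le> n" "exp (2 * real d) * (t + t^2) < occ_var d n m"
  shows "t < poisson_occ d n m"
proof (rule ccontr)
  assume "\<not> t < poisson_occ d n m"
  hence "poisson_occ d n m + (poisson_occ d n m)^2 \<le> t + t^2"
    using poisson_occ_nonneg by (intro add_mono power_mono) auto
  hence "exp (2 * real d) * (poisson_occ d n m + (poisson_occ d n m)^2) \<le> exp (2 * real d) * (t + t^2)"
    by (rule mult_left_mono) simp
  thus False using occ_var_le_poisson[OF assms(1,2)] assms(3) by linarith
qed

lemma poisson_occ_le_urns: "poisson_occ d n m \<le> real m"
proof -
  have "(real n / real m)^d * exp (- (real n / real m)) / fact d \<le> 1"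
    using pow_mul_exp_neg_le_fact[of "real n / real m" d] by simp
  hence "real m * ((real n / real m)^d * exp (- (real n / real m)) / fact d) \<le> real m"
    by (rule mult_left_le) simp
  thus ?thesis by (simp add: poisson_occ_def)
qed

lemma poisson_occ_le_pow_balls:
  assumes "1 \<le> d" "1 \<le> m"
  shows "poisson_occ d n m \<le> real n ^ d"
proof -
  have "real m ^ d = real m * real m ^ (d - 1)" using assms by (simp add: power_eq_if)
  hence "poisson_occ d n m = (real n ^ d / real m ^ (d - 1)) * exp (- (real n / real m)) / fact d"
    using assms by (simp add: poisson_occ_def power_divide)
  also have "\<dots> \<le> (real n ^ d / 1) * 1 / 1"
    using assms by (intro divide_mono mult_mono) auto
  finally show ?thesis by simp
qed

lemma poisson_occ_le_when_dense:
  fixes \<epsilon> :: real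
  assumes "2 \<le> m" "0 < \<epsilon>" "(1 + \<epsilon>) * ln (real m) < real n / real m"
  shows "poisson_occ d n m \<le> ((1 + \<epsilon>) / \<epsilon>)^d"
proof -
  define \<delta> where "\<delta> = \<epsilon> / (1 + \<epsilon>)"
  define l where "l = real n / real m"
  have \<delta>pos: "0 < \<delta>" using assms by (simp add: \<delta>_def)
  have l0: "0 \<le> l" by (simp add: l_def)
  have "ln (real m) * (1 + \<epsilon>) < l" using assms(3) by (simp add: l_def mult.commute)
  hence "ln (real m) < l / (1 + \<epsilon>)" using pos_less_divide_eq[of "1 + \<epsilon>"] assms(2) by simp
  hence "ln (real m) - l \<le> - (\<delta> * l)" using assms by (simp add: \<delta>_def field_simps)
  hence "exp (ln (real m) - l) \<le> exp (- (\<delta> * l))" by simp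
  hence me: "real m * exp (-l) \<le> exp (- (\<delta> * l))" using assms by (simp add: exp_diff exp_minus field_simps)
  have "poisson_occ d n m = (real m * exp (-l)) * l^d / fact d" by (simp add: poisson_occ_def l_def)
  also have "\<dots> \<le> exp (- (\<delta> * l)) * l^d / fact d"
    using me l0 by (intro divide_right_mono mult_right_mono) auto
  also have "\<dots> = ((\<delta> * l)^d * exp (- (\<delta> * l)) / fact d) / \<delta>^d"
    using \<delta>pos by (simp add: power_mult_distrib)
  also have "\<dots> \<le> 1 / \<delta>^d"
    using pow_mul_exp_neg_le_fact[of "\<delta> * l" d] \<delta>pos l0 by (intro divide_right_mono) simp_all
  finally show ?thesis by (simp add: \<delta>_def power_divide)
qed

lemma poisson_occ_large_implies:
  fixes M N \<epsilon> :: real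
  assumes "2 \<le> m" "1 \<le> d" "0 < \<epsilon>" "0 \<le> N"
    and T: "max M (max (N^d) (((1 + \<epsilon>) / \<epsilon>)^d)) < poisson_occ d n m"
  shows "M < real m \<and> N < real n \<and> real n / real m \<le> (1 + \<epsilon>) * ln (real m)"
proof (intro conjI)
  show "M < real m" using T poisson_occ_le_urns[of d n m] by (simp add: max_less_iff_conj)
  show "N < real n"
  proof (rule ccontr)
    assume "\<not> N < real n"
    hence "real n ^ d \<le> N ^ d" by (intro power_mono) auto
    hence "poisson_occ d n m \<le> N ^ d" using poisson_occ_le_pow_balls[of d m n] assms by linarith
    thus False using T by (simp add: max_less_iff_conj)
  qed
  show "real n / real m \<le> (1 + \<epsilon>) * ln (real m)"
  proof (rule ccontr)
    assume "\<not> real n / real m \<le> (1 + \<epsilon>) * ln (real m)"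
    hence "poisson_occ d n m \<le> ((1 + \<epsilon>) / \<epsilon>)^d"
      by (intro poisson_occ_le_when_dense[OF assms(1,3)]) simp
    thus False using T by (simp add: max_less_iff_conj)
  qed
qed



section \<open>The second-moment ratio and part (c)\<close>

text \<open>
  The ratio R = W / mu^2, split into three factors: an inflation factor from the
  powers of m, the factorial ratio of Section 3, and a collision factor.
  Then sigma^2 = mu - mu^2 (1 - R).
\<close>
definition pair_ratio :: "nat \<Rightarrow> nat \<Rightarrow> nat \<Rightarrow> real" where
  "pair_ratio d n m = (real m / (real m - 1))^(2*d - 1)
      * ((fact (n-d))^2 / (fact n * fact (n - 2*d))) * (1 - 1 / (real m - 1)^2)^(n - 2*d)"

text \<open>The explicit upper bound for 1 - R obtained from the logarithms of the three factors.\<close>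
definition pair_deficit :: "nat \<Rightarrow> nat \<Rightarrow> nat \<Rightarrow> real" where
  "pair_deficit d n m = real d^2 / (real n - 2*real d + 1) + real n / (real m * (real m - 2))
      - (2*real d - 1) / real m"

text \<open>Two specific urns avoided jointly versus separately: 1 - 2/m = (1 - 1/m)^2 (1 - 1/(m-1)^2).\<close>
lemma collision_factor_identity:
  fixes m :: real
  assumes "1 < m"
  shows "(1 - 1/m)^2 * (1 - 1/(m - 1)^2) = 1 - 2/m"
proof -
  have pos: "0 < (m - 1)^2" using assms by simp
  have a: "1 - 1/m = (m - 1)/m" using assms by (simp add: field_simps)
  have b: "1 - 1/(m - 1)^2 = ((m - 1)^2 - 1)/(m - 1)^2" using pos by (simp add: field_simps)
  have "(1 - 1/m)^2 * (1 - 1/(m - 1)^2) = ((m - 1)^2 - 1) / m^2"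
    unfolding a b using pos by (simp add: power_divide)
  also have "\<dots> = 1 - 2/m" using assms by (simp add: field_simps power2_eq_square)
  finally show ?thesis .
qed

lemma occ_pair_eq_ratio:
  assumes "3 \<le> m" "2*d \<le> n" "1 \<le> d"
  shows "occ_pair d n m = (occ_mean d n m)^2 * pair_ratio d n m"
proof -
  obtain K where nK: "n = K + 2*d" using assms by (metis add.commute le_Suc_ex)
  have nd: "n - d = K + d" "n - 2*d = K" using nK by auto
  have m3: "3 \<le> real m" using assms by simp
  define x where "x = 1 - 1 / real m"
  define Q where "Q = (real m / (real m - 1))^(2*d - 1)"
  define Cb where "Cb = (fact n :: real) / (fact d * fact (K+d))"
  define \<rho> where "\<rho> = (fact (K+d))^2 / ((fact n :: real) * fact K)"
  define Cc where "Cc = (1 - 1 / (real m - 1)^2)^K"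
  have mean: "occ_mean d n m = real m * Cb * (1 / real m ^ d) * x^(K+d)"
    using assms by (simp add: occ_mean_alt Cb_def binomial_fact nd x_def)
  have inflation: "(x^(K+d))^2 * Q = x^(2*K) * x"
  proof -
    have e: "(K+d)*2 = Suc (2*K) + (2*d - 1)" using assms by simp
    have "(x^(K+d))^2 = x^((K+d)*2)" by (simp only: power_mult)
    also have "\<dots> = x^(2*K) * x * x^(2*d - 1)" by (simp only: e power_add power_Suc2)
    finally have "(x^(K+d))^2 = x^(2*K) * x * x^(2*d - 1)" .
    moreover have "x * (real m / (real m - 1)) = 1" using m3 by (simp add: x_def field_simps)
    hence "x^(2*d - 1) * Q = 1" unfolding Q_def by (metis power_mult_distrib power_one)
    ultimately show ?thesis by (metis mult.assoc mult.right_neutral)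
  qed
  have collision: "x^(2*K) * Cc = (1 - 2 / real m)^K"
    using collision_factor_identity[of "real m"] m3
    by (simp add: Cc_def x_def power_mult power_mult_distrib[symmetric])
  have "(occ_mean d n m)^2 * (Q * \<rho> * Cc)
      = (real m * Cb * (1 / real m ^ d))^2 * ((x^(K+d))^2 * Q) * \<rho> * Cc"
    unfolding mean by (simp only: power_mult_distrib mult_ac)
  also have "\<dots> = (real m^2 * x) * (Cb^2 * \<rho>) * (1 / real m ^ d)^2 * (x^(2*K) * Cc)"
    unfolding inflation by (simp only: power_mult_distrib mult_ac)
  also have "\<dots> = real m * (real m - 1) * (fact n / (fact d * fact d * fact K))
      * (1 / real m ^ (2*d)) * (1 - 2 / real m)^K"
  proof -
    have "real m^2 * x = real m * (real m - 1)" using m3 by (simp add: x_def field_simps power2_eq_square)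
    moreover have "Cb^2 * \<rho> = fact n / (fact d * fact d * fact K)"
      by (simp add: Cb_def \<rho>_def power2_eq_square field_simps)
    moreover have "(1 / real m ^ d)^2 = 1 / real m ^ (2*d)"
      by (simp add: power_mult[symmetric] power_divide mult.commute)
    ultimately show ?thesis by (simp only: collision)
  qed
  also have "\<dots> = occ_pair d n m" by (simp add: occ_pair_def nd)
  finally show ?thesis by (simp add: pair_ratio_def Q_def \<rho>_def Cc_def nd)
qed

lemma ln_inflation_factor_ge:
  assumes "3 \<le> m" "1 \<le> d"
  shows "(2*real d - 1) / real m \<le> ln ((real m / (real m - 1))^(2*d - 1))"
proof -
  have "1 / real m \<le> ln (real m / (real m - 1))"
    using ln_ge_one_minus_inverse[of "real m / (real m - 1)"] assms by (simp add: field_simps)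
  hence "real (2*d - 1) * (1 / real m) \<le> real (2*d - 1) * ln (real m / (real m - 1))"
    by (rule mult_left_mono) simp
  moreover have "real (2*d - 1) = 2*real d - 1" using assms by (simp add: of_nat_diff)
  ultimately show ?thesis using assms by (simp add: ln_realpow)
qed

lemma ln_fact_ratio_ge:
  assumes "2*d \<le> n"
  shows "- (real d^2 / (real n - 2*real d + 1)) \<le> ln ((fact (n-d))^2 / (fact n * fact (n - 2*d)))"
proof -
  define y where "y = (real n - 2*real d + 1) / (real n - real d + 1)"
  have ypos: "0 < y" using assms by (simp add: y_def)
  have "- (real d / (real n - 2*real d + 1)) = 1 - 1/y" using assms by (simp add: y_def field_simps)
  also have "\<dots> \<le> ln y" by (rule ln_ge_one_minus_inverse[OF ypos])
  finally have "real d * (- (real d / (real n - 2*real d + 1))) \<le> real d * ln y"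
    by (rule mult_left_mono) simp
  also have "real d * ln y = ln (y^d)" using ypos by (simp add: ln_realpow)
  also have "\<dots> \<le> ln ((fact (n-d))^2 / (fact n * fact (n - 2*d)))"
    using fact_ratio_ge[OF assms] ypos by (subst ln_le_cancel_iff) (simp_all add: y_def)
  finally show ?thesis by (simp add: power2_eq_square)
qed

lemma ln_collision_factor_ge:
  assumes "3 \<le> m" "k \<le> n"
  shows "- (real n / (real m * (real m - 2))) \<le> ln ((1 - 1 / (real m - 1)^2)^k)"
proof -
  define s where "s = 1 / (real m - 1)^2"
  have "(2::real)^2 \<le> (real m - 1)^2" by (rule power_mono) (use assms in auto)
  hence s1: "s < 1" by (simp add: s_def divide_less_eq)
  have "0 < (real m - 1)^2" using assms by simp
  hence "1 + real m * real m \<noteq> real m * 2" by (simp add: power2_eq_square algebra_simps)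
  hence "- (1 / (real m * (real m - 2))) = 1 - 1 / (1 - s)"
    using assms by (simp add: s_def field_simps power2_eq_square)
  also have "\<dots> \<le> ln (1 - s)" using s1 by (intro ln_ge_one_minus_inverse) simp
  finally have ls: "- (1 / (real m * (real m - 2))) \<le> ln (1 - s)" .
  have c: "0 \<le> 1 / (real m * (real m - 2))" using assms by simp
  have "- (real n / (real m * (real m - 2))) \<le> - (real k * (1 / (real m * (real m - 2))))"
    using mult_right_mono[OF _ c, of "real k" "real n"] assms by simp
  also have "\<dots> \<le> real k * ln (1 - s)" using mult_left_mono[OF ls, of "real k"] by simp
  also have "\<dots> = ln ((1 - s)^k)" using s1 by (simp add: ln_realpow)
  finally show ?thesis by (simp add: s_def)
qed

text \<open>The deficit bounds 1 - R, via 1 - R <= -ln R.\<close>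
lemma one_minus_pair_ratio_le:
  assumes "3 \<le> m" "2*d \<le> n" "1 \<le> d"
  shows "1 - pair_ratio d n m \<le> pair_deficit d n m"
proof -
  define Q where "Q = (real m / (real m - 1))^(2*d - 1)"
  define \<rho> where "\<rho> = (fact (n-d))^2 / ((fact n :: real) * fact (n - 2*d))"
  define Cc where "Cc = (1 - 1 / (real m - 1)^2)^(n - 2*d)"
  have "(2::real)^2 \<le> (real m - 1)^2" by (rule power_mono) (use assms in auto)
  hence "1 / (real m - 1)^2 < 1" by (simp add: divide_less_eq)
  hence "0 < Cc" by (simp add: Cc_def)
  moreover have "0 < Q" "0 < \<rho>" using assms by (simp_all add: Q_def \<rho>_def)
  moreover have "pair_ratio d n m = Q * \<rho> * Cc" by (simp add: pair_ratio_def Q_def \<rho>_def Cc_def)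
  ultimately have R: "0 < pair_ratio d n m" "ln (pair_ratio d n m) = ln Q + ln \<rho> + ln Cc"
    by (simp_all add: ln_mult)
  have "1 - pair_ratio d n m \<le> - ln (pair_ratio d n m)" using ln_le_minus_one[OF R(1)] by simp
  also have "\<dots> \<le> pair_deficit d n m"
    using R(2) ln_inflation_factor_ge[OF assms(1,3)] ln_fact_ratio_ge[OF assms(2)]
      ln_collision_factor_ge[OF assms(1) diff_le_self[of n "2*d"]]
    unfolding pair_deficit_def Q_def \<rho>_def Cc_def by linarith
  finally show ?thesis .
qed

text \<open>
  T times the deficit, rewritten in terms of the load l = n/m: the leading term is
  the dispersion profile, the two others are of order d^3/n and 1/m.
\<close>
lemma poisson_deficit_identity:
  fixes l m d P Ex fd N :: real
  assumes "0 < l" "2 < m" "0 < N" "0 < fd" "l*m = N + 2*d - 1"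
  shows "m * (l*P) * Ex / fd * (d^2/N + (l*m)/(m*(m - 2)) - (2*d - 1)/m)
       = P*Ex*((l - d)^2 + l)/fd + (P*Ex) * (d^2*(2*d - 1)/(fd*N)) + (l*l*P*Ex) * (2/(fd*(m - 2)))"
proof -
  have s1: "l*(l*m/(m - 2)) = l^2 + 2*l^2/(m - 2)" using assms by (simp add: field_simps power2_eq_square)
  have "l*(d^2*m/N) = d^2*(l*m)/N" by simp
  also have "\<dots> = d^2*(N + (2*d - 1))/N" using assms by simp
  also have "\<dots> = d^2 + d^2*(2*d - 1)/N" using assms by (simp add: field_simps)
  finally have s2: "l*(d^2*m/N) = d^2 + d^2*(2*d - 1)/N" .
  have "m * (l*P) * Ex / fd * (d^2/N + (l*m)/(m*(m - 2)) - (2*d - 1)/m)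
      = (P*Ex/fd) * (- (2*d - 1)*l + l*(d^2*m/N) + l*(l*m/(m - 2)))"
    using assms by (simp add: field_simps)
  also have "\<dots> = (P*Ex/fd) * (((l - d)^2 + l) + d^2*(2*d - 1)/N + 2*l^2/(m - 2))"
    unfolding s1 s2 by (simp add: power2_eq_square algebra_simps)
  also have "\<dots> = P*Ex*((l - d)^2 + l)/fd + (P*Ex) * (d^2*(2*d - 1)/(fd*N)) + (l*l*P*Ex) * (2/(fd*(m - 2)))"
    using assms by (simp add: field_simps power2_eq_square)
  finally show ?thesis .
qed

lemma poisson_occ_deficit_le:
  assumes "2 \<le> d" "100*real d^2 + 2*real d \<le> real n" "100*real d + 102 \<le> real m"
  shows "poisson_occ d n m * pair_deficit d n m \<le> 79/100"
proof -
  define l where "l = real n / real m"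
  define P where "P = l^(d-1)"
  define Ex where "Ex = exp (-l)"
  define fd where "fd = (fact d :: real)"
  define N where "N = real n - 2*real d + 1"
  have mpos: "2 < real m" using assms by simp
  have dsq: "0 \<le> real d^2" by simp
  have npos: "0 < real n" using assms dsq by linarith
  have lpos: "0 < l" using mpos npos by (simp add: l_def)
  have Npos: "0 < N" using assms dsq unfolding N_def by linarith
  have fdpos: "0 < fd" by (simp add: fd_def)
  have nl: "real n = l * real m" using mpos by (simp add: l_def)
  have ld: "l^d = l * P" using assms by (simp add: P_def power_eq_if)
  have fd_eq: "fd = real d * fact (d-1)" using assms by (simp add: fd_def fact_reduce)
  have T: "poisson_occ d n m = real m * (l*P) * Ex / fd"
    by (simp add: poisson_occ_def l_def[symmetric] ld Ex_def fd_def)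
  have "poisson_occ d n m * pair_deficit d n m
     = P*Ex*((l - real d)^2 + l)/fd + (P*Ex) * (real d^2*(2*real d - 1)/(fd*N))
       + (l*l*P*Ex) * (2/(fd*(real m - 2)))"
    unfolding T pair_deficit_def N_def[symmetric] unfolding nl
    by (rule poisson_deficit_identity) (use lpos mpos Npos fdpos in \<open>auto simp: N_def nl\<close>)
  moreover have "P*Ex*((l - real d)^2 + l)/fd \<le> 3/4"
    using dispersion_profile_le[OF assms(1) lpos] fdpos
    by (simp add: dispersion_profile_def P_def Ex_def fd_def divide_le_eq)
  moreover have "(P*Ex) * (real d^2*(2*real d - 1)/(fd*N)) \<le> 1/50"
  proof -
    have "P*Ex \<le> fact (d-1)" using lpos by (simp add: P_def Ex_def pow_mul_exp_neg_le_fact)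
    hence "(P*Ex) * (real d^2*(2*real d - 1)/(fd*N)) \<le> fact (d-1) * (real d^2*(2*real d - 1)/(fd*N))"
      by (rule mult_right_mono) (use assms fdpos Npos in simp)
    also have "\<dots> = real d*(2*real d - 1)/N"
      using assms Npos by (simp add: fd_eq power2_eq_square field_simps)
    also have "\<dots> \<le> 1/50"
    proof -
      have "50 * (real d*(2*real d - 1)) \<le> N" using assms by (simp add: N_def power2_eq_square algebra_simps)
      thus ?thesis using Npos by (simp add: divide_le_eq)
    qed
    finally show ?thesis .
  qed
  moreover have "(l*l*P*Ex) * (2/(fd*(real m - 2))) \<le> 1/50"
  proof -
    have "l*l*P*Ex = l^(d+1) * exp (-l)" by (simp add: ld Ex_def)
    also have "\<dots> \<le> fact (d+1)" using lpos by (intro pow_mul_exp_neg_le_fact) simp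
    also have "\<dots> = (real d + 1) * fd" by (simp add: fd_def)
    finally have "(l*l*P*Ex) * (2/(fd*(real m - 2))) \<le> ((real d + 1) * fd) * (2/(fd*(real m - 2)))"
      by (rule mult_right_mono) (use mpos fdpos in simp)
    also have "\<dots> = 2*(real d + 1)/(real m - 2)" using fdpos by simp
    also have "\<dots> \<le> 1/50" using assms mpos by (simp add: divide_le_eq)
    finally show ?thesis .
  qed
  ultimately show ?thesis by linarith
qed

text \<open>Transfer from T to the exact mean, using e^(d/m) <= 1.0101 for m >= 100 d.\<close>
lemma occ_mean_deficit_le:
  assumes "2 \<le> d" "100*real d^2 + 2*real d \<le> real n" "100*real d + 102 \<le> real m"
  shows "occ_mean d n m * pair_deficit d n m \<le> 4/5"
proof (cases "pair_deficit d n m \<le> 0")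
  case True
  have "occ_mean d n m * pair_deficit d n m \<le> 0"
    using occ_mean_nonneg[of m d n] assms True by (intro mult_nonneg_nonpos) auto
  thus ?thesis by simp
next
  case False
  have q: "real d / real m \<le> 1/100" using assms by (simp add: divide_le_eq)
  have "exp (real d / real m) \<le> 1 + real d / real m + (real d / real m)^2"
  proof (rule exp_bound)
    show "real d / real m \<le> 1" using q by linarith
  qed simp
  also have "(real d / real m)^2 \<le> (1/100)^2" by (rule power_mono[OF q]) simp
  finally have e: "exp (real d / real m) \<le> 10101/10000" using q unfolding power2_eq_square by linarith
  have "real d \<le> real n" using assms zero_le_power2[of "real d"] by linarith
  hence n_ge_d: "d \<le> n" by simp
  have "occ_mean d n m * pair_deficit d n m
      \<le> (exp (real d / real m) * poisson_occ d n m) * pair_deficit d n m"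
    using occ_mean_le_poisson[of m d n] assms n_ge_d False by (intro mult_right_mono) auto
  also have "\<dots> = exp (real d / real m) * (poisson_occ d n m * pair_deficit d n m)" by simp
  also have "\<dots> \<le> (10101/10000) * (79/100)"
    using e poisson_occ_deficit_le[OF assms] poisson_occ_nonneg False by (intro mult_mono) auto
  finally show ?thesis by simp
qed

lemma occ_mean_le_five_var:
  assumes "2 \<le> d" "100*real d^2 + 2*real d \<le> real n" "100*real d + 102 \<le> real m"
  shows "occ_mean d n m \<le> 5 * occ_var d n m"
proof -
  let ?\<mu> = "occ_mean d n m"
  have "2 * real d \<le> real n" using assms zero_le_power2[of "real d"] by linarith
  hence "real (2*d) \<le> real n" by simp
  hence n2d: "2*d \<le> n" by (simp only: of_nat_le_iff)
  have m3: "3 \<le> m" using assms by linarith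
  have \<mu>0: "0 \<le> ?\<mu>" using occ_mean_nonneg[of m d n] m3 by simp
  have var: "occ_var d n m = ?\<mu> - ?\<mu>^2 * (1 - pair_ratio d n m)"
    using occ_pair_eq_ratio[OF m3 n2d] assms n2d by (simp add: occ_var_eq algebra_simps)
  have "?\<mu>^2 * (1 - pair_ratio d n m) \<le> ?\<mu> * (?\<mu> * pair_deficit d n m)"
    using mult_left_mono[OF one_minus_pair_ratio_le[OF m3 n2d], of "?\<mu>^2"] assms
    by (simp add: power2_eq_square mult_ac)
  also have "\<dots> \<le> ?\<mu> * (4/5)" using occ_mean_deficit_le[OF assms] \<mu>0 by (intro mult_left_mono) auto
  finally show ?thesis using var by simp
qed


theorem lemma3p1:
  fixes d :: nat and nstar mstar \<epsilon> :: real
  assumes "d \<ge> 2" and "\<epsilon> > 0"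
  shows "\<exists>r1 > 0. \<exists>C > 0. \<forall>n m :: nat. n \<ge> d \<longrightarrow> m \<ge> 2 \<longrightarrow> occ_var d n m \<ge> r1 \<longrightarrow>
           (real n > nstar \<and> real m > mstar)
         \<and> real n / real m \<le> (1 + \<epsilon>) * ln (real m)
         \<and> occ_mean d n m \<le> C * occ_var d n m"
proof -
  define M where "M = max mstar (100*real d + 102)"
  define N where "N = max nstar (100*real d^2 + 2*real d)"
  define t where "t = max M (max (N^d) (((1 + \<epsilon>) / \<epsilon>)^d))"
  define r1 where "r1 = exp (2*real d) * (t + t^2) + 1"
  have N0: "0 \<le> N" by (simp add: N_def le_max_iff_disj)
  have t0: "0 \<le> t" by (simp add: t_def M_def le_max_iff_disj)
  have "0 \<le> exp (2*real d) * (t + t^2)" using t0 by simp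
  hence r1pos: "0 < r1" by (simp add: r1_def)
  have main: "(real n > nstar \<and> real m > mstar) \<and> real n / real m \<le> (1 + \<epsilon>) * ln (real m)
         \<and> occ_mean d n m \<le> 5 * occ_var d n m"
    if "d \<le> n" "2 \<le> m" "r1 \<le> occ_var d n m" for n m :: nat
  proof -
    have "exp (2*real d) * (t + t^2) < occ_var d n m" using that(3) by (simp add: r1_def)
    hence T: "t < poisson_occ d n m" by (rule poisson_occ_gt_of_large_var[OF that(2,1)])
    have "M < real m \<and> N < real n \<and> real n / real m \<le> (1 + \<epsilon>) * ln (real m)"
      by (rule poisson_occ_large_implies[OF that(2) _ assms(2) N0 T[unfolded t_def]]) (use assms(1) in simp)
    thus ?thesis using occ_mean_le_five_var[OF assms(1)] by (simp add: M_def N_def)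
  qed
  show ?thesis
    using r1pos main by (intro exI[of _ r1] exI[of _ "5::real"] conjI allI impI) auto
qed

end
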